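(* Let $\mathbf x_1,\ldots,\mathbf x_n\in\mathbb{R}^d\setminus\{\mathbf 0\}$, with $x_{ij}$ the $j$-th coordinate of $\mathbf x_i$, and suppose the probit likelihood $\ell(\beta)=\prod_{i=1}^n\Phi(\mathbf x_i^T\beta)$ has a unique global maximizer on $\mathbb{R}^d$. Let $\pi(\beta)\propto\ell(\beta)$ be the posterior under a flat prior. For $j=1,\ldots,d$ let $$z_j(\beta)=-\frac12\sum_{i=1}^n\frac{x_{ij}\,\phi(\mathbf x_i^T\beta)}{\Phi(\mathbf x_i^T\beta)}.$$ Then for every $\delta>0$ and every $j$, $\mathbb{E}_\pi[|z_j|^{2+\delta}]<\infty$.
   Context: $\Phi$ and $\phi$ denote the standard normal c.d.f. and density. The $z_j$ are the control variates $-\frac12\partial_{\beta_j}\ln\pi$ of the zero-variance method with linear trial polynomial. *)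

theory Defs
  imports "HOL-Probability.Probability"
begin

definition std_phi :: "real \<Rightarrow> real" where
  "std_phi t = std_normal_density t"

definition std_Phi :: "real \<Rightarrow> real" where
  "std_Phi x = (LBINT t:{..x}. std_normal_density t)"

definition probit_lik :: "nat \<Rightarrow> (nat \<Rightarrow> real ^ 'd) \<Rightarrow> real ^ 'd \<Rightarrow> real" where
  "probit_lik n x \<beta> = (\<Prod>i<n. std_Phi (x i \<bullet> \<beta>))"

definition zv_control :: "nat \<Rightarrow> (nat \<Rightarrow> real ^ 'd) \<Rightarrow> 'd \<Rightarrow> real ^ 'd \<Rightarrow> real" where
  "zv_control n x j \<beta> =
     - (1/2) * (\<Sum>i<n. (x i $ j) * std_phi (x i \<bullet> \<beta>) / std_Phi (x i \<bullet> \<beta>))"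

end

theory Submission
  imports Defs
begin

text \<open>
  Uniqueness of the maximiser forces every direction u \<noteq> 0 to have some x_i with
  x_i \<bullet> u < 0 (otherwise moving the maximiser along u cannot decrease the likelihood), and by
  compactness of the unit sphere even x_i \<bullet> \<beta> \<le> -c |\<beta>| uniformly. The Gaussian tail of the
  factor \<Phi>(x_i \<bullet> \<beta>) then bounds the likelihood by a Gaussian in \<beta>. On the other hand the
  Mills-type estimate \<phi>(t) / \<Phi>(t) \<le> exp(3/2) (1 + |t|) makes |z_j| grow at most linearly, and
  every power of a linear function is dominated by any Gaussian factor exp(\<epsilon> |\<beta>|^2).
\<close>

lemma std_Phi_eq_integral:
  "std_Phi t = integral\<^sup>L lborel (\<lambda>u. indicator {..t} u * std_normal_density u)"
  unfolding std_Phi_def set_lebesgue_integral_def by simp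

lemma integrable_indicator_normal_density:
  assumes "A \<in> sets borel" "0 < \<sigma>"
  shows "integrable lborel (\<lambda>u. indicator A u * normal_density \<mu> \<sigma> u)"
proof -
  have "integrable lborel (\<lambda>u. indicator A u *\<^sub>R normal_density \<mu> \<sigma> u)"
    by (rule integrable_mult_indicator) (use assms in auto)
  then show ?thesis by simp
qed

lemma std_Phi_nonneg: "0 \<le> std_Phi t"
  unfolding std_Phi_eq_integral by (rule integral_nonneg_AE) (auto split: split_indicator)

lemma std_Phi_le_1: "std_Phi t \<le> 1"
proof -
  have "std_Phi t \<le> integral\<^sup>L lborel std_normal_density"
    unfolding std_Phi_eq_integral
    by (rule integral_mono[OF integrable_indicator_normal_density]) (auto split: split_indicator)
  then show ?thesis by simp
qed

lemma std_Phi_mono: "s \<le> t \<Longrightarrow> std_Phi s \<le> std_Phi t"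
  unfolding std_Phi_eq_integral
  by (rule integral_mono[OF integrable_indicator_normal_density integrable_indicator_normal_density])
    (auto split: split_indicator)

lemma borel_measurable_std_Phi [measurable]: "std_Phi \<in> borel_measurable borel"
  by (rule borel_measurable_mono) (auto simp: mono_def std_Phi_mono)

lemma borel_measurable_std_phi [measurable]: "std_phi \<in> borel_measurable borel"
  unfolding std_phi_def[abs_def] by measurable

lemma power2_le_power2_add_3:
  fixes t u :: real
  assumes "t - 1 / (1 + \<bar>t\<bar>) \<le> u" "u \<le> t"
  shows "u\<^sup>2 \<le> t\<^sup>2 + 3"
proof -
  define h where "h = 1 / (1 + \<bar>t\<bar>)"
  have h: "0 < h" "h \<le> 1" "\<bar>t\<bar> * h \<le> 1"
    unfolding h_def by (auto simp: field_simps)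
  have "\<bar>u\<bar> \<le> \<bar>t\<bar> + h" using assms h_def by auto
  then have "u\<^sup>2 \<le> (\<bar>t\<bar> + h)\<^sup>2"
    using power_mono[of "\<bar>u\<bar>" "\<bar>t\<bar> + h" 2] by simp
  also have "\<dots> = t\<^sup>2 + 2 * (\<bar>t\<bar> * h) + h * h"
    by (simp add: power2_eq_square algebra_simps)
  also have "\<dots> \<le> t\<^sup>2 + 3" using h mult_le_one[of h h] by auto
  finally show ?thesis .
qed

text \<open>The density stays above exp(-3/2) \<phi>(t) on the interval [t - 1/(1 + |t|), t].\<close>
lemma std_Phi_lower_bound: "exp (-3/2) * std_normal_density t / (1 + \<bar>t\<bar>) \<le> std_Phi t"
proof -
  define h where "h = 1 / (1 + \<bar>t\<bar>)"
  define c where "c = exp (-3/2) * std_normal_density t"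
  have "integral\<^sup>L lborel (\<lambda>u. indicator {t-h..t} u * c) \<le> std_Phi t"
    unfolding std_Phi_eq_integral
  proof (rule integral_mono)
    show "integrable lborel (\<lambda>u. indicator {t-h..t} u * c)"
      by (intro integrable_mult_left integrable_real_indicator) (auto simp: emeasure_lborel_Icc_eq)
    show "integrable lborel (\<lambda>u. indicator {..t} u * std_normal_density u)"
      by (rule integrable_indicator_normal_density) simp_all
    fix u
    show "indicator {t-h..t} u * c \<le> indicator {..t} u * std_normal_density u"
    proof (cases "u \<in> {t-h..t}")
      case True
      then have "u\<^sup>2 \<le> t\<^sup>2 + 3" using power2_le_power2_add_3[of t u] h_def by auto
      then have "exp (-3/2) * exp (- t\<^sup>2/2) \<le> exp (- u\<^sup>2/2)"
        by (simp add: exp_add[symmetric])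
      then have "c \<le> std_normal_density u" unfolding c_def std_normal_density_def
        using divide_right_mono by (simp add: mult.left_commute) fastforce
      then show ?thesis using True by auto
    qed auto
  qed
  moreover have "integral\<^sup>L lborel (\<lambda>u. indicator {t-h..t} u * c) = h * c"
    unfolding h_def by simp
  ultimately show ?thesis unfolding h_def c_def by simp
qed

lemma std_Phi_pos: "0 < std_Phi t"
  using std_Phi_lower_bound[of t] normal_density_pos[of 1 0 t]
  by (smt (verit) divide_pos_pos exp_gt_zero mult_pos_pos)

lemma std_phi_div_std_Phi_le: "std_phi t / std_Phi t \<le> exp (3/2) * (1 + \<bar>t\<bar>)"
proof -
  have "exp (-3/2) * std_normal_density t \<le> std_Phi t * (1 + \<bar>t\<bar>)"
    using std_Phi_lower_bound[of t] by (simp add: field_simps)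
  then have "std_normal_density t \<le> exp (3/2) * (std_Phi t * (1 + \<bar>t\<bar>))"
    by (simp add: exp_minus field_simps)
  then show ?thesis using std_Phi_pos[of t] by (simp add: std_phi_def field_simps)
qed

text \<open>On u \<le> -s one has exp(-u^2/2) \<le> exp(-s^2/4) exp(-u^2/4), and exp(-u^2/4) is a multiple
  of the N(0,2) density.\<close>
lemma std_Phi_neg_le:
  assumes "0 \<le> s"
  shows "std_Phi (-s) \<le> sqrt 2 * exp (- s\<^sup>2/4)"
proof -
  define c where "c = sqrt 2 * exp (- s\<^sup>2/4)"
  have "std_Phi (-s) \<le> integral\<^sup>L lborel (\<lambda>u. c * normal_density 0 (sqrt 2) u)"
    unfolding std_Phi_eq_integral
  proof (rule integral_mono)
    show "integrable lborel (\<lambda>u. c * normal_density 0 (sqrt 2) u)"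
      by (intro integrable_mult_right integrable_normal_density) simp
    show "integrable lborel (\<lambda>u. indicator {..-s} u * std_normal_density u)"
      by (rule integrable_indicator_normal_density) simp_all
    fix u
    show "indicator {..-s} u * std_normal_density u \<le> c * normal_density 0 (sqrt 2) u"
    proof (cases "u \<le> -s")
      case True
      then have "s\<^sup>2 \<le> u\<^sup>2"
        using assms power_mono[of s "-u" 2] by simp
      then have "exp (- u\<^sup>2/2) \<le> exp (- s\<^sup>2/4) * exp (- u\<^sup>2/4)"
        by (simp add: exp_add[symmetric])
      then have "std_normal_density u \<le> exp (- s\<^sup>2/4) * exp (- u\<^sup>2/4) / sqrt (2*pi)"
        unfolding std_normal_density_def by (simp add: divide_right_mono)
      also have "\<dots> = c * normal_density 0 (sqrt 2) u"
        unfolding c_def normal_density_def by (simp add: real_sqrt_mult field_simps)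
      finally show ?thesis using True by simp
    qed (simp add: c_def)
  qed
  also have "\<dots> = c" by simp
  finally show ?thesis by (simp add: c_def)
qed

lemma integrable_exp_neg_sqr:
  assumes "0 < c"
  shows "integrable lborel (\<lambda>t::real. exp (- c * t\<^sup>2))"
proof -
  have "exp (- c * t\<^sup>2) = sqrt (pi / c) * normal_density 0 (sqrt (1 / (2*c))) t" for t
    using assms unfolding normal_density_def by (simp add: real_sqrt_divide field_simps)
  then show ?thesis
    using assms by (simp add: integrable_mult_right integrable_normal_density)
qed

lemma integrable_exp_neg_norm_sqr:
  assumes "0 < c"
  shows "integrable lborel (\<lambda>x::'a::euclidean_space. exp (- c * (norm x)\<^sup>2))"
proof -
  have split: "exp (- c * (norm x)\<^sup>2) = (\<Prod>b\<in>Basis. exp (- c * (x \<bullet> b)\<^sup>2))" for x :: 'a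
  proof -
    have "(norm x)\<^sup>2 = (\<Sum>b\<in>Basis. (x \<bullet> b)\<^sup>2)"
      unfolding power2_norm_eq_inner by (subst euclidean_inner) (simp add: power2_eq_square)
    then show ?thesis by (simp add: sum_distrib_left exp_sum)
  qed
  have "(\<integral>\<^sup>+x. ennreal (exp (- c * (norm x)\<^sup>2)) \<partial>(lborel::'a measure))
      = (\<integral>\<^sup>+x. (\<Prod>b\<in>Basis. ennreal (exp (- c * (x \<bullet> b)\<^sup>2))) \<partial>(lborel::'a measure))"
    unfolding split by (subst prod_ennreal) auto
  also have "\<dots> = (\<Prod>b\<in>(Basis::'a set). \<integral>\<^sup>+t. ennreal (exp (- c * t\<^sup>2)) \<partial>lborel)"
    by (rule nn_integral_lborel_prod[where f="\<lambda>b t. ennreal (exp (- c * t\<^sup>2))"]) auto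
  also have "\<dots> = ennreal (\<Prod>b\<in>(Basis::'a set). integral\<^sup>L lborel (\<lambda>t::real. exp (- c * t\<^sup>2)))"
  proof -
    have "(\<integral>\<^sup>+t. ennreal (exp (- c * t\<^sup>2)) \<partial>lborel) = ennreal (integral\<^sup>L lborel (\<lambda>t. exp (- c * t\<^sup>2)))"
      by (rule nn_integral_eq_integral[OF integrable_exp_neg_sqr[OF assms]]) simp
    then show ?thesis by (simp only:) (rule prod_ennreal, auto intro!: integral_nonneg_AE)
  qed
  finally show ?thesis
    by (intro integrableI_nonneg) auto
qed

lemma one_plus_powr_le_exp:
  fixes r p a :: real
  assumes "0 \<le> r" "0 \<le> p" "0 < a"
  shows "(1 + r) powr p \<le> exp (p\<^sup>2 / (2*a)) * exp (a * r\<^sup>2 / 2)"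
proof -
  have "(1 + r) powr p = exp (p * ln (1 + r))"
    using assms by (simp add: powr_def)
  also have "\<dots> \<le> exp (p * r)"
    using assms by (simp add: mult_left_mono ln_add_one_self_le_self)
  also have "\<dots> \<le> exp (p\<^sup>2 / (2*a) + a * r\<^sup>2 / 2)"
  proof -
    have "2 * a * (p * r) \<le> p\<^sup>2 + a\<^sup>2 * r\<^sup>2"
      using zero_le_power2[of "a * r - p"] by (simp add: power2_eq_square algebra_simps)
    then show ?thesis using assms by (simp add: field_simps power2_eq_square)
  qed
  finally show ?thesis by (simp add: exp_add)
qed

lemma uniformly_negative_direction:
  fixes v :: "nat \<Rightarrow> 'a::euclidean_space"
  assumes neg: "\<And>u. u \<noteq> 0 \<Longrightarrow> \<exists>i<n. v i \<bullet> u < 0"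
  shows "\<exists>c>0. \<forall>\<beta>. \<exists>i<n. v i \<bullet> \<beta> \<le> - c * norm \<beta>"
proof -
  define F where "F u = (\<Sum>i<n. min 0 (v i \<bullet> u))" for u
  have "continuous_on (sphere 0 1) F" unfolding F_def by (intro continuous_intros)
  then obtain u0 where u0: "u0 \<in> sphere 0 1" and max: "\<And>u. u \<in> sphere 0 1 \<Longrightarrow> F u \<le> F u0"
    using continuous_attains_sup[of "sphere (0::'a) 1" F] by auto
  have "u0 \<noteq> 0" using u0 by auto
  then obtain i0 where i0: "i0 < n" "v i0 \<bullet> u0 < 0" using neg by blast
  have "- min 0 (v i0 \<bullet> u0) \<le> (\<Sum>i<n. - min 0 (v i \<bullet> u0))"
    by (rule member_le_sum) (use i0 in auto)
  then have "F u0 < 0" using i0 unfolding F_def by (simp add: sum_negf)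
  define c where "c = - F u0 / n"
  have c: "0 < c" unfolding c_def using \<open>F u0 < 0\<close> i0 by (simp add: divide_neg_pos)
  have unit: "\<exists>i<n. v i \<bullet> u \<le> - c" if "norm u = 1" for u
  proof (rule ccontr)
    assume "\<not> ?thesis"
    then have "\<And>i. i < n \<Longrightarrow> - c < min 0 (v i \<bullet> u)" using c by force
    then have "(\<Sum>i<n. - c) < F u"
      unfolding F_def by (intro sum_strict_mono) (use i0 in auto)
    moreover have "(\<Sum>i<n. - c) = F u0" unfolding c_def using i0 by simp
    ultimately show False using max[of u] that by simp
  qed
  have "\<exists>i<n. v i \<bullet> \<beta> \<le> - c * norm \<beta>" for \<beta>
  proof (cases "\<beta> = 0")
    case True
    then show ?thesis using i0 by auto
  next
    case False
    then obtain i where i: "i < n" "v i \<bullet> (\<beta> /\<^sub>R norm \<beta>) \<le> - c" using unit[of "\<beta> /\<^sub>R norm \<beta>"] by auto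
    have "v i \<bullet> \<beta> = norm \<beta> * (v i \<bullet> (\<beta> /\<^sub>R norm \<beta>))" using False by simp
    also have "\<dots> \<le> - c * norm \<beta>" using mult_left_mono[OF i(2), of "norm \<beta>"] by (simp add: mult.commute)
    finally show ?thesis using i(1) by blast
  qed
  then show ?thesis using c by blast
qed

lemma probit_lik_nonneg: "0 \<le> probit_lik n x \<beta>"
  unfolding probit_lik_def by (auto intro!: prod_nonneg std_Phi_nonneg)

lemma probit_lik_le_std_Phi:
  assumes "i < n"
  shows "probit_lik n x \<beta> \<le> std_Phi (x i \<bullet> \<beta>)"
proof -
  have "probit_lik n x \<beta> = std_Phi (x i \<bullet> \<beta>) * (\<Prod>k\<in>{..<n}-{i}. std_Phi (x k \<bullet> \<beta>))"
    unfolding probit_lik_def using assms by (subst prod.remove[of _ i]) auto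
  also have "\<dots> \<le> std_Phi (x i \<bullet> \<beta>)"
    using mult_left_mono[OF prod_le_1, of "{..<n}-{i}" "\<lambda>k. std_Phi (x k \<bullet> \<beta>)"]
    by (simp add: std_Phi_nonneg std_Phi_le_1)
  finally show ?thesis .
qed

lemma probit_lik_le_shift:
  assumes "\<And>i. i < n \<Longrightarrow> 0 \<le> x i \<bullet> u"
  shows "probit_lik n x b \<le> probit_lik n x (b + u)"
  unfolding probit_lik_def
  by (rule prod_mono) (auto simp: std_Phi_nonneg inner_add_right intro!: std_Phi_mono assms)

lemma unique_max_imp_negative_direction:
  assumes unique_max: "\<exists>!b. \<forall>\<beta>. probit_lik n x \<beta> \<le> probit_lik n x b"
    and "u \<noteq> 0"
  shows "\<exists>i<n. x i \<bullet> u < 0"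
proof (rule ccontr)
  assume "\<not> ?thesis"
  then have "probit_lik n x b \<le> probit_lik n x (b + u)" for b
    by (intro probit_lik_le_shift) (meson not_le)
  with unique_max have "\<exists>b. b + u = b" by (meson order_trans)
  then show False using \<open>u \<noteq> 0\<close> by simp
qed

lemma probit_lik_le_gaussian:
  assumes "\<exists>!b. \<forall>\<beta>. probit_lik n x \<beta> \<le> probit_lik n x b"
  shows "\<exists>a>0. \<forall>\<beta>. probit_lik n x \<beta> \<le> sqrt 2 * exp (- a * (norm \<beta>)\<^sup>2)"
proof -
  obtain c where c: "0 < c" and sep: "\<And>\<beta>. \<exists>i<n. x i \<bullet> \<beta> \<le> - c * norm \<beta>"
    using uniformly_negative_direction[OF unique_max_imp_negative_direction[OF assms]] by blast
  have "probit_lik n x \<beta> \<le> sqrt 2 * exp (- (c\<^sup>2/4) * (norm \<beta>)\<^sup>2)" for \<beta>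
  proof -
    obtain i where "i < n" "x i \<bullet> \<beta> \<le> - (c * norm \<beta>)" using sep by auto
    then have "probit_lik n x \<beta> \<le> std_Phi (- (c * norm \<beta>))"
      by (meson probit_lik_le_std_Phi std_Phi_mono order_trans)
    also have "\<dots> \<le> sqrt 2 * exp (- (c * norm \<beta>)\<^sup>2 / 4)"
      using c by (intro std_Phi_neg_le) simp
    finally show ?thesis by (simp add: power_mult_distrib)
  qed
  then show ?thesis using c by (intro exI[of _ "c\<^sup>2/4"]) auto
qed

lemma abs_zv_control_le:
  "\<bar>zv_control n x j \<beta>\<bar> \<le> (\<Sum>i<n. \<bar>x i $ j\<bar> * exp (3/2) * (1 + norm (x i))) * (1 + norm \<beta>)"
proof -
  have term_le: "\<bar>x i $ j * std_phi (x i \<bullet> \<beta>) / std_Phi (x i \<bullet> \<beta>)\<bar>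
      \<le> \<bar>x i $ j\<bar> * exp (3/2) * (1 + norm (x i)) * (1 + norm \<beta>)" for i
  proof -
    let ?t = "x i \<bullet> \<beta>"
    have "1 + \<bar>?t\<bar> \<le> (1 + norm (x i)) * (1 + norm \<beta>)"
      using Cauchy_Schwarz_ineq2[of "x i" \<beta>] by (simp add: algebra_simps) (smt (verit) norm_ge_zero)
    then have "std_phi ?t / std_Phi ?t \<le> exp (3/2) * ((1 + norm (x i)) * (1 + norm \<beta>))"
      using std_phi_div_std_Phi_le[of ?t] by (smt (verit) exp_gt_zero mult_left_mono)
    then have "\<bar>x i $ j\<bar> * (std_phi ?t / std_Phi ?t)
        \<le> \<bar>x i $ j\<bar> * (exp (3/2) * ((1 + norm (x i)) * (1 + norm \<beta>)))"
      by (rule mult_left_mono) simp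
    moreover have "\<bar>x i $ j * std_phi ?t / std_Phi ?t\<bar> = \<bar>x i $ j\<bar> * (std_phi ?t / std_Phi ?t)"
      using std_Phi_pos[of ?t] by (simp add: abs_mult std_phi_def)
    ultimately show ?thesis by (simp only: mult.assoc)
  qed
  have "\<bar>zv_control n x j \<beta>\<bar> \<le> \<bar>\<Sum>i<n. x i $ j * std_phi (x i \<bullet> \<beta>) / std_Phi (x i \<bullet> \<beta>)\<bar>"
    unfolding zv_control_def by (simp add: abs_mult)
  also have "\<dots> \<le> (\<Sum>i<n. \<bar>x i $ j\<bar> * exp (3/2) * (1 + norm (x i)) * (1 + norm \<beta>))"
    by (rule order_trans[OF sum_abs sum_mono]) (rule term_le)
  finally show ?thesis by (simp add: sum_distrib_right)
qed

lemma abs_zv_control_powr_le_exp: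
  assumes "0 \<le> p" "0 < a"
  shows "\<exists>C. \<forall>\<beta>. \<bar>zv_control n x j \<beta>\<bar> powr p \<le> C * exp (a * (norm \<beta>)\<^sup>2 / 2)"
proof -
  define K where "K = (\<Sum>i<n. \<bar>x i $ j\<bar> * exp (3/2) * (1 + norm (x i)))"
  have "K \<ge> 0" unfolding K_def by (intro sum_nonneg) auto
  have "\<bar>zv_control n x j \<beta>\<bar> powr p \<le> K powr p * exp (p\<^sup>2 / (2*a)) * exp (a * (norm \<beta>)\<^sup>2 / 2)" for \<beta>
  proof -
    have "\<bar>zv_control n x j \<beta>\<bar> powr p \<le> (K * (1 + norm \<beta>)) powr p"
      using abs_zv_control_le assms unfolding K_def by (intro powr_mono2) auto
    also have "\<dots> = K powr p * (1 + norm \<beta>) powr p" using \<open>K \<ge> 0\<close> by (simp add: powr_mult)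
    also have "\<dots> \<le> K powr p * (exp (p\<^sup>2 / (2*a)) * exp (a * (norm \<beta>)\<^sup>2 / 2))"
      using one_plus_powr_le_exp assms by (intro mult_left_mono) auto
    finally show ?thesis by (simp add: mult.assoc)
  qed
  then show ?thesis by blast
qed

theorem mainTheorem6:
  fixes n :: nat and x :: "nat \<Rightarrow> real ^ 'd" and \<delta> :: real and j :: 'd
  assumes nonzero: "\<And>i. i < n \<Longrightarrow> x i \<noteq> 0"
    and unique_max: "\<exists>!b. \<forall>\<beta>. probit_lik n x \<beta> \<le> probit_lik n x b"
    and delta_pos: "\<delta> > 0"
  shows "integrable lborel
           (\<lambda>\<beta>. \<bar>zv_control n x j \<beta>\<bar> powr (2 + \<delta>) * probit_lik n x \<beta>)"
proof -
  obtain a where a: "0 < a" and lik: "\<And>\<beta>. probit_lik n x \<beta> \<le> sqrt 2 * exp (- a * (norm \<beta>)\<^sup>2)"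
    using probit_lik_le_gaussian[OF unique_max] by blast
  obtain C where z: "\<And>\<beta>. \<bar>zv_control n x j \<beta>\<bar> powr (2 + \<delta>) \<le> C * exp (a * (norm \<beta>)\<^sup>2 / 2)"
    using abs_zv_control_powr_le_exp[where p="2 + \<delta>" and a=a and n=n and x=x and j=j] delta_pos a by auto
  have bound: "\<bar>zv_control n x j \<beta>\<bar> powr (2 + \<delta>) * probit_lik n x \<beta>
      \<le> sqrt 2 * C * exp (- (a/2) * (norm \<beta>)\<^sup>2)" for \<beta> :: "real ^ 'd"
  proof -
    have "\<bar>zv_control n x j \<beta>\<bar> powr (2 + \<delta>) * probit_lik n x \<beta>
        \<le> C * exp (a * (norm \<beta>)\<^sup>2 / 2) * (sqrt 2 * exp (- a * (norm \<beta>)\<^sup>2))"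
      using z lik probit_lik_nonneg by (intro mult_mono) (auto intro: order_trans[OF _ z])
    also have "\<dots> = sqrt 2 * C * exp (- (a/2) * (norm \<beta>)\<^sup>2)"
      by (simp add: exp_add[symmetric])
    finally show ?thesis .
  qed
  have "integrable lborel (\<lambda>\<beta>::real ^ 'd. sqrt 2 * C * exp (- (a/2) * (norm \<beta>)\<^sup>2))"
    using integrable_exp_neg_norm_sqr[of "a/2"] a by (intro integrable_mult_right) simp
  moreover have "(\<lambda>\<beta>. \<bar>zv_control n x j \<beta>\<bar> powr (2 + \<delta>) * probit_lik n x \<beta>) \<in> borel_measurable lborel"
    unfolding zv_control_def probit_lik_def by measurable
  moreover have "AE \<beta> in lborel. norm (\<bar>zv_control n x j \<beta>\<bar> powr (2 + \<delta>) * probit_lik n x \<beta>)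
      \<le> norm (sqrt 2 * C * exp (- (a/2) * (norm \<beta>)\<^sup>2))"
  proof (rule AE_I2)
    fix \<beta> :: "real ^ 'd"
    have "norm (\<bar>zv_control n x j \<beta>\<bar> powr (2 + \<delta>) * probit_lik n x \<beta>)
        = \<bar>zv_control n x j \<beta>\<bar> powr (2 + \<delta>) * probit_lik n x \<beta>"
      unfolding real_norm_def by (intro abs_of_nonneg mult_nonneg_nonneg probit_lik_nonneg) simp
    also have "\<dots> \<le> sqrt 2 * C * exp (- (a/2) * (norm \<beta>)\<^sup>2)" by (rule bound)
    also have "\<dots> \<le> norm (sqrt 2 * C * exp (- (a/2) * (norm \<beta>)\<^sup>2))"
      unfolding real_norm_def by (rule abs_ge_self)
    finally show "norm (\<bar>zv_control n x j \<beta>\<bar> powr (2 + \<delta>) * probit_lik n x \<beta>)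
        \<le> norm (sqrt 2 * C * exp (- (a/2) * (norm \<beta>)\<^sup>2))" .
  qed
  ultimately show ?thesis by (rule Bochner_Integration.integrable_bound)
qed

end
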